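(* For every multiway system $M=(R,s,\Sigma)$ there is a multiway system $M'=(R',s',\{a,b\})$, where $a,b$ are two distinct symbols, such that the states graphs of $M$ and $M'$ are isomorphic.
   Context: A (string-based) multiway system is a triple $(R,s,\Sigma)$ with $\Sigma$ a finite alphabet, $R$ a finite set of string replacement rules $r\to t$ with $r,t\in\Sigma^*$, and initial string $s\in\Sigma^*$. Its states graph is the directed graph whose vertices are the strings reachable from $s$ by repeated rule application, with an edge $u\to v$ whenever $v$ arises from $u$ by replacing one occurrence of some rule's left side $r$ in $u$ by the corresponding right side $t$. *)

theory Defs
  imports Main
begin

definition multiway_system :: "('a list \<times> 'a list) set \<Rightarrow> 'a list \<Rightarrow> 'a set \<Rightarrow> bool" where
  "multiway_system R s \<Sigma> \<longleftrightarrow>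
     finite \<Sigma> \<and> finite R \<and> (\<forall>(r, t) \<in> R. set r \<subseteq> \<Sigma> \<and> set t \<subseteq> \<Sigma>) \<and> set s \<subseteq> \<Sigma>"

definition mw_step :: "('a list \<times> 'a list) set \<Rightarrow> 'a list \<Rightarrow> 'a list \<Rightarrow> bool" where
  "mw_step R u v \<longleftrightarrow> (\<exists>x y r t. (r, t) \<in> R \<and> u = x @ r @ y \<and> v = x @ t @ y)"

definition mw_states :: "('a list \<times> 'a list) set \<Rightarrow> 'a list \<Rightarrow> 'a list set" where
  "mw_states R s = {v. (mw_step R)\<^sup>*\<^sup>* s v}"

definition mw_edges :: "('a list \<times> 'a list) set \<Rightarrow> 'a list \<Rightarrow> ('a list \<times> 'a list) set" where
  "mw_edges R s = {(u, v). u \<in> mw_states R s \<and> v \<in> mw_states R s \<and> mw_step R u v}"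

definition digraph_iso :: "'u set \<Rightarrow> ('u \<times> 'u) set \<Rightarrow> 'v set \<Rightarrow> ('v \<times> 'v) set \<Rightarrow> bool" where
  "digraph_iso V E W F \<longleftrightarrow>
     (\<exists>f. bij_betw f V W \<and> (\<forall>u\<in>V. \<forall>v\<in>V. (u, v) \<in> E \<longleftrightarrow> (f u, f v) \<in> F))"

end

theory Submission
  imports Defs
begin

text \<open>Two normalisations, each given by an injective map on words that turns steps into
  steps and back, hence an isomorphism of states graphs.
  First every left side is made nonempty: append an end marker to all words and let each
  rule carry one symbol of right context (a letter or the marker).
  Then every letter is replaced by a codeword \<open>a b\<^sup>n\<^sup>+\<^sup>1 a\<close> for an injective numbering
  \<open>n\<close> of the letters. In a concatenation of codewords \<open>a b\<close> occurs exactly at the codeword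
  boundaries, and every encoded nonempty left side begins with \<open>a b\<close>, so every occurrence
  of an encoded left side in an encoded word is the encoding of an occurrence.\<close>

lemma digraph_iso_trans:
  assumes "digraph_iso V E W F" "digraph_iso W F X G"
  shows "digraph_iso V E X G"
proof -
  obtain f where f: "bij_betw f V W" "\<forall>u\<in>V. \<forall>v\<in>V. (u, v) \<in> E \<longleftrightarrow> (f u, f v) \<in> F"
    using assms(1) by (auto simp: digraph_iso_def)
  obtain g where g: "bij_betw g W X" "\<forall>u\<in>W. \<forall>v\<in>W. (u, v) \<in> F \<longleftrightarrow> (g u, g v) \<in> G"
    using assms(2) by (auto simp: digraph_iso_def)
  have "bij_betw (g \<circ> f) V X" using f(1) g(1) by (rule bij_betw_trans)
  moreover have "\<forall>u\<in>V. \<forall>v\<in>V. (u, v) \<in> E \<longleftrightarrow> ((g \<circ> f) u, (g \<circ> f) v) \<in> G"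
    using f g bij_betwE[OF f(1)] by auto
  ultimately show ?thesis unfolding digraph_iso_def by blast
qed

lemma mw_step_preserves_alphabet:
  assumes "\<forall>(r, t) \<in> R. set r \<subseteq> A \<and> set t \<subseteq> A" "set u \<subseteq> A" "mw_step R u v"
  shows "set v \<subseteq> A"
  using assms unfolding mw_step_def by fastforce

lemma mw_states_subset_if_closed:
  assumes "s \<in> S" and "\<And>u v. u \<in> S \<Longrightarrow> mw_step R u v \<Longrightarrow> v \<in> S"
  shows "mw_states R s \<subseteq> S"
proof
  fix v assume "v \<in> mw_states R s"
  hence "(mw_step R)\<^sup>*\<^sup>* s v" by (simp add: mw_states_def)
  thus "v \<in> S" by induction (use assms in auto)
qed

lemma mw_states_simulation:
  assumes sub: "mw_states R s \<subseteq> S"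
    and sim: "\<And>u v'. u \<in> S \<Longrightarrow> mw_step R' (\<phi> u) v' \<longleftrightarrow> (\<exists>v. mw_step R u v \<and> v' = \<phi> v)"
  shows "mw_states R' (\<phi> s) = \<phi> ` mw_states R s"
proof (intro subset_antisym subsetI)
  fix v' assume "v' \<in> mw_states R' (\<phi> s)"
  hence "(mw_step R')\<^sup>*\<^sup>* (\<phi> s) v'" by (simp add: mw_states_def)
  thus "v' \<in> \<phi> ` mw_states R s"
  proof induction
    case base thus ?case by (auto simp: mw_states_def)
  next
    case (step y' z')
    then obtain y where y: "y \<in> mw_states R s" "y' = \<phi> y" by auto
    with step(2) sub sim obtain z where "mw_step R y z" "z' = \<phi> z" by blast
    with y show ?case by (auto simp: mw_states_def intro: rtranclp.rtrancl_into_rtrancl)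
  qed
next
  fix x assume "x \<in> \<phi> ` mw_states R s"
  then obtain v where v: "(mw_step R)\<^sup>*\<^sup>* s v" "x = \<phi> v" by (auto simp: mw_states_def)
  have "(mw_step R')\<^sup>*\<^sup>* (\<phi> s) (\<phi> v)" using v(1)
  proof induction
    case (step y z)
    have "y \<in> S" using step(1) sub by (auto simp: mw_states_def)
    hence "mw_step R' (\<phi> y) (\<phi> z)" using sim step(2) by blast
    thus ?case using step(3) by (auto intro: rtranclp.rtrancl_into_rtrancl)
  qed simp
  thus "x \<in> mw_states R' (\<phi> s)" using v by (simp add: mw_states_def)
qed

lemma digraph_iso_if_simulation:
  assumes "s \<in> S" and closed: "\<And>u v. u \<in> S \<Longrightarrow> mw_step R u v \<Longrightarrow> v \<in> S"
    and inj: "inj_on \<phi> S"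
    and sim: "\<And>u v'. u \<in> S \<Longrightarrow> mw_step R' (\<phi> u) v' \<longleftrightarrow> (\<exists>v. mw_step R u v \<and> v' = \<phi> v)"
  shows "digraph_iso (mw_states R s) (mw_edges R s) (mw_states R' (\<phi> s)) (mw_edges R' (\<phi> s))"
proof -
  have sub: "mw_states R s \<subseteq> S" using assms(1) closed by (rule mw_states_subset_if_closed)
  note states = mw_states_simulation[OF sub sim]
  have bij: "bij_betw \<phi> (mw_states R s) (mw_states R' (\<phi> s))"
    using states inj_on_subset[OF inj sub] by (simp add: bij_betw_def)
  have steps: "mw_step R' (\<phi> u) (\<phi> v) \<longleftrightarrow> mw_step R u v" if "u \<in> S" "v \<in> S" for u v
  proof
    assume "mw_step R' (\<phi> u) (\<phi> v)"
    then obtain w where w: "mw_step R u w" "\<phi> v = \<phi> w" using sim[OF \<open>u \<in> S\<close>] by blast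
    with closed[OF \<open>u \<in> S\<close>] \<open>v \<in> S\<close> inj have "v = w" by (auto dest: inj_onD)
    with w show "mw_step R u v" by simp
  qed (use sim[OF \<open>u \<in> S\<close>] in blast)
  have "(u, v) \<in> mw_edges R s \<longleftrightarrow> (\<phi> u, \<phi> v) \<in> mw_edges R' (\<phi> s)"
    if "u \<in> mw_states R s" "v \<in> mw_states R s" for u v
    using that states steps[of u v] sub by (auto simp: mw_edges_def)
  with bij show ?thesis unfolding digraph_iso_def by blast
qed

definition end_marked :: "'a list \<Rightarrow> 'a option list" where
  "end_marked w = map Some w @ [None]"

definition end_marked_rules ::
    "('a list \<times> 'a list) set \<Rightarrow> 'a set \<Rightarrow> ('a option list \<times> 'a option list) set" where
  "end_marked_rules R \<Sigma> =
     (\<lambda>((r, t), c). (map Some r @ [c], map Some t @ [c])) ` (R \<times> insert None (Some ` \<Sigma>))"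

lemma end_marked_suffix:
  assumes "end_marked u = P @ c # Y"
  shows "\<exists>x y. u = x @ y \<and> P = map Some x \<and> c # Y = end_marked y"
proof (cases Y rule: rev_cases)
  case Nil
  with assms show ?thesis by (intro exI[of _ u] exI[of _ "[]"]) (auto simp: end_marked_def)
next
  case (snoc Y0 y)
  with assms have "map Some u = P @ c # Y0" "y = None" by (auto simp: end_marked_def)
  with snoc show ?thesis by (auto simp: map_eq_append_conv end_marked_def)
qed

lemma mw_step_end_marked_iff:
  assumes "set u \<subseteq> \<Sigma>"
  shows "mw_step (end_marked_rules R \<Sigma>) (end_marked u) v' \<longleftrightarrow>
         (\<exists>v. mw_step R u v \<and> v' = end_marked v)"
proof
  assume "mw_step (end_marked_rules R \<Sigma>) (end_marked u) v'"
  then obtain X Y r t c where rt: "(r, t) \<in> R"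
    and u: "end_marked u = (X @ map Some r) @ c # Y" and v': "v' = X @ map Some t @ c # Y"
    unfolding mw_step_def end_marked_rules_def by auto
  from end_marked_suffix[OF u] obtain xr y where
    "u = xr @ y" "X @ map Some r = map Some xr" "c # Y = end_marked y" by blast
  moreover from this(2) obtain x where "xr = x @ r" "X = map Some x"
    by (auto simp: append_eq_map_conv inj_map_eq_map)
  moreover have "mw_step R (x @ r @ y) (x @ t @ y)" unfolding mw_step_def using rt by blast
  ultimately show "\<exists>v. mw_step R u v \<and> v' = end_marked v"
    using v' by (auto simp: end_marked_def)
next
  assume "\<exists>v. mw_step R u v \<and> v' = end_marked v"
  then obtain x y r t where rt: "(r, t) \<in> R" and u: "u = x @ r @ y"
    and v': "v' = end_marked (x @ t @ y)"
    unfolding mw_step_def by auto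
  obtain c Y where cY: "end_marked y = c # Y" "c \<in> insert None (Some ` set y)"
    by (cases y) (auto simp: end_marked_def)
  with assms u have "(map Some r @ [c], map Some t @ [c]) \<in> end_marked_rules R \<Sigma>"
    using rt unfolding end_marked_rules_def by (auto intro!: image_eqI[of _ _ "((r, t), c)"])
  hence "mw_step (end_marked_rules R \<Sigma>) (map Some x @ (map Some r @ [c]) @ Y)
      (map Some x @ (map Some t @ [c]) @ Y)"
    unfolding mw_step_def by blast
  with cY(1) show "mw_step (end_marked_rules R \<Sigma>) (end_marked u) v'"
    using u v' by (simp add: end_marked_def)
qed

lemma end_marked_normalization:
  assumes "multiway_system R s \<Sigma>"
  shows "multiway_system (end_marked_rules R \<Sigma>) (end_marked s) (insert None (Some ` \<Sigma>))
    \<and> (\<forall>(r, t) \<in> end_marked_rules R \<Sigma>. r \<noteq> [])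
    \<and> digraph_iso (mw_states R s) (mw_edges R s)
        (mw_states (end_marked_rules R \<Sigma>) (end_marked s))
        (mw_edges (end_marked_rules R \<Sigma>) (end_marked s))"
proof (intro conjI)
  have rules: "\<forall>(r, t) \<in> R. set r \<subseteq> \<Sigma> \<and> set t \<subseteq> \<Sigma>" and "set s \<subseteq> \<Sigma>"
    using assms by (auto simp: multiway_system_def)
  show "multiway_system (end_marked_rules R \<Sigma>) (end_marked s) (insert None (Some ` \<Sigma>))"
    using assms by (fastforce simp: multiway_system_def end_marked_rules_def end_marked_def)
  show "\<forall>(r, t) \<in> end_marked_rules R \<Sigma>. r \<noteq> []"
    by (auto simp: end_marked_rules_def)
  show "digraph_iso (mw_states R s) (mw_edges R s)
      (mw_states (end_marked_rules R \<Sigma>) (end_marked s))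
      (mw_edges (end_marked_rules R \<Sigma>) (end_marked s))"
  proof (rule digraph_iso_if_simulation[where S = "{w. set w \<subseteq> \<Sigma>}"])
    show "inj_on end_marked {w. set w \<subseteq> \<Sigma>}"
      by (auto intro: inj_onI simp: end_marked_def inj_map_eq_map)
    show "mw_step (end_marked_rules R \<Sigma>) (end_marked u) v' \<longleftrightarrow>
        (\<exists>v. mw_step R u v \<and> v' = end_marked v)" if "u \<in> {w. set w \<subseteq> \<Sigma>}" for u v'
      using that by (simp add: mw_step_end_marked_iff)
  qed (use \<open>set s \<subseteq> \<Sigma>\<close> mw_step_preserves_alphabet[OF rules] in auto)
qed

definition codeword :: "'b \<Rightarrow> 'b \<Rightarrow> nat \<Rightarrow> 'b list" where
  "codeword a b n = a # replicate (Suc n) b @ [a]"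

definition block_encode :: "'b \<Rightarrow> 'b \<Rightarrow> ('c \<Rightarrow> nat) \<Rightarrow> 'c list \<Rightarrow> 'b list" where
  "block_encode a b f w = concat (map (\<lambda>x. codeword a b (f x)) w)"

definition block_encoded_rules ::
    "'b \<Rightarrow> 'b \<Rightarrow> ('c \<Rightarrow> nat) \<Rightarrow> ('c list \<times> 'c list) set \<Rightarrow> ('b list \<times> 'b list) set" where
  "block_encoded_rules a b f Q =
     (\<lambda>(r, t). (block_encode a b f r, block_encode a b f t)) ` Q"

lemma block_encode_simps [simp]:
  "block_encode a b f [] = []"
  "block_encode a b f (x # w) = codeword a b (f x) @ block_encode a b f w"
  "block_encode a b f (u @ v) = block_encode a b f u @ block_encode a b f v"
  by (auto simp: block_encode_def)

lemma set_block_encode: "set (block_encode a b f w) \<subseteq> {a, b}"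
  by (induction w) (auto simp: codeword_def)

lemma block_encode_ne_Cons_b:
  assumes "a \<noteq> b"
  shows "block_encode a b f w \<noteq> b # Z"
  using assms by (cases w) (auto simp: codeword_def)

lemma replicate_append_Cons_cancel:
  assumes "a \<noteq> b" "replicate m b @ a # P = replicate n b @ a # Q"
  shows "m = n \<and> P = Q"
  using assms(2)
proof (induction m arbitrary: n)
  case 0 thus ?case using assms(1) by (cases n) auto
next
  case (Suc m) thus ?case using assms(1) by (cases n) auto
qed

lemma codeword_append_cancel:
  assumes "a \<noteq> b" "codeword a b m @ P = codeword a b n @ Q"
  shows "m = n \<and> P = Q"
  using assms replicate_append_Cons_cancel[OF assms(1), of "Suc m" P "Suc n" Q]
  by (simp add: codeword_def)

lemma block_encode_prefix:
  assumes "a \<noteq> b" "inj_on f A" "set r \<subseteq> A" "set w \<subseteq> A"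
    and "block_encode a b f r @ Y = block_encode a b f w"
  shows "\<exists>w2. w = r @ w2 \<and> Y = block_encode a b f w2"
  using assms(3-5)
proof (induction r arbitrary: w)
  case (Cons c r)
  then obtain d w' where w: "w = d # w'" by (cases w) (auto simp: codeword_def)
  with Cons.prems have "codeword a b (f c) @ (block_encode a b f r @ Y) =
      codeword a b (f d) @ block_encode a b f w'" by simp
  from codeword_append_cancel[OF assms(1) this]
  have "f c = f d" "block_encode a b f r @ Y = block_encode a b f w'" by auto
  moreover have "c = d" using \<open>f c = f d\<close> assms(2) Cons.prems w by (auto dest: inj_onD)
  ultimately show ?case using Cons w by force
qed simp

lemma inj_on_block_encode:
  assumes "a \<noteq> b" "inj_on f A"
  shows "inj_on (block_encode a b f) {w. set w \<subseteq> A}"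
proof (rule inj_onI)
  fix u v assume "u \<in> {w. set w \<subseteq> A}" "v \<in> {w. set w \<subseteq> A}"
    "block_encode a b f u = block_encode a b f v"
  then obtain w2 where "v = u @ w2" "[] = block_encode a b f w2"
    using block_encode_prefix[OF assms, of u v "[]"] by auto
  thus "u = v" by (cases w2) (auto simp: codeword_def)
qed

lemma replicate_Cons_ab_split:
  assumes "a \<noteq> b" "\<forall>Z'. W \<noteq> b # Z'" "replicate k b @ a # W = X @ a # b # Z"
  shows "\<exists>X'. X = replicate k b @ a # X' \<and> W = X' @ a # b # Z"
  using assms(3)
proof (induction k arbitrary: X)
  case 0 thus ?case using assms(1,2) by (cases X) auto
next
  case (Suc k) thus ?case using assms(1) by (cases X) auto
qed

lemma block_encode_split_at_ab:
  assumes "a \<noteq> b" "block_encode a b f w = X @ a # b # Z"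
  shows "\<exists>w1 w2. w = w1 @ w2 \<and> X = block_encode a b f w1 \<and> a # b # Z = block_encode a b f w2"
  using assms(2)
proof (induction w arbitrary: X)
  case (Cons c w)
  show ?case
  proof (cases X)
    case Nil with Cons.prems show ?thesis by (intro exI[of _ "[]"] exI[of _ "c # w"]) auto
  next
    case (Cons x X')
    with Cons.prems \<open>a \<noteq> b\<close> have "x = a"
      and "replicate (Suc (f c)) b @ a # block_encode a b f w = X' @ a # b # Z"
      by (auto simp: codeword_def)
    from replicate_Cons_ab_split[OF \<open>a \<noteq> b\<close> allI[OF block_encode_ne_Cons_b[OF \<open>a \<noteq> b\<close>]] this(2)]
    obtain X'' where X'': "X' = replicate (Suc (f c)) b @ a # X''"
      "block_encode a b f w = X'' @ a # b # Z" by blast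
    from Cons.IH[OF X''(2)] obtain w1 w2 where
      "w = w1 @ w2" "X'' = block_encode a b f w1" "a # b # Z = block_encode a b f w2" by blast
    with X''(1) \<open>X = x # X'\<close> \<open>x = a\<close> show ?thesis
      by (intro exI[of _ "c # w1"] exI[of _ w2]) (simp add: codeword_def)
  qed
qed simp

lemma block_encode_occurrence:
  assumes "a \<noteq> b" "inj_on f A" "set r \<subseteq> A" "r \<noteq> []" "set w \<subseteq> A"
    and "block_encode a b f w = X @ block_encode a b f r @ Y"
  shows "\<exists>w1 w2. w = w1 @ r @ w2 \<and> X = block_encode a b f w1 \<and> Y = block_encode a b f w2"
proof -
  obtain Z where "block_encode a b f r @ Y = a # b # Z"
    using \<open>r \<noteq> []\<close> by (cases r) (auto simp: codeword_def)
  with block_encode_split_at_ab[OF \<open>a \<noteq> b\<close>] assms(6) obtain w1 w2 where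
    w: "w = w1 @ w2" "X = block_encode a b f w1"
    "block_encode a b f r @ Y = block_encode a b f w2"
    by (metis append_eq_append_conv block_encode_simps(3))
  with block_encode_prefix[OF assms(1-3) _ w(3)] assms(5) show ?thesis by auto
qed

lemma mw_step_block_encoded_iff:
  assumes "a \<noteq> b" "inj_on f A"
    and rules: "\<forall>(r, t) \<in> Q. r \<noteq> [] \<and> set r \<subseteq> A"
    and "set u \<subseteq> A"
  shows "mw_step (block_encoded_rules a b f Q) (block_encode a b f u) v' \<longleftrightarrow>
         (\<exists>v. mw_step Q u v \<and> v' = block_encode a b f v)"
proof
  assume "mw_step (block_encoded_rules a b f Q) (block_encode a b f u) v'"
  then obtain X Y r t where rt: "(r, t) \<in> Q"
    and u: "block_encode a b f u = X @ block_encode a b f r @ Y"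
    and v': "v' = X @ block_encode a b f t @ Y"
    unfolding mw_step_def block_encoded_rules_def by auto
  from rt rules have "r \<noteq> []" "set r \<subseteq> A" by auto
  from block_encode_occurrence[OF assms(1,2) this(2,1) assms(4) u] obtain w1 w2 where
    "u = w1 @ r @ w2" "X = block_encode a b f w1" "Y = block_encode a b f w2" by blast
  moreover have "mw_step Q (w1 @ r @ w2) (w1 @ t @ w2)" unfolding mw_step_def using rt by blast
  ultimately show "\<exists>v. mw_step Q u v \<and> v' = block_encode a b f v" using v' by auto
next
  assume "\<exists>v. mw_step Q u v \<and> v' = block_encode a b f v"
  then obtain x y r t where rt: "(r, t) \<in> Q" and "u = x @ r @ y"
    and "v' = block_encode a b f (x @ t @ y)"
    unfolding mw_step_def by auto
  moreover from rt have "(block_encode a b f r, block_encode a b f t) \<in> block_encoded_rules a b f Q"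
    unfolding block_encoded_rules_def by force
  hence "mw_step (block_encoded_rules a b f Q)
      (block_encode a b f x @ block_encode a b f r @ block_encode a b f y)
      (block_encode a b f x @ block_encode a b f t @ block_encode a b f y)"
    unfolding mw_step_def by blast
  ultimately show "mw_step (block_encoded_rules a b f Q) (block_encode a b f u) v'" by simp
qed

lemma binary_normalization:
  fixes Q :: "('c list \<times> 'c list) set" and a b :: 'b
  assumes sys: "multiway_system Q s A" and nonempty: "\<forall>(r, t) \<in> Q. r \<noteq> []" and "a \<noteq> b"
  shows "\<exists>(R' :: ('b list \<times> 'b list) set) s'. multiway_system R' s' {a, b} \<and>
           digraph_iso (mw_states Q s) (mw_edges Q s) (mw_states R' s') (mw_edges R' s')"
proof -
  have rules: "\<forall>(r, t) \<in> Q. set r \<subseteq> A \<and> set t \<subseteq> A" and "set s \<subseteq> A" "finite A" "finite Q"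
    using sys by (auto simp: multiway_system_def)
  obtain f :: "'c \<Rightarrow> nat" where inj: "inj_on f A"
    using finite_imp_inj_to_nat_seg[OF \<open>finite A\<close>] by blast
  have "multiway_system (block_encoded_rules a b f Q) (block_encode a b f s) {a, b}"
    using \<open>finite Q\<close>
    by (simp add: multiway_system_def block_encoded_rules_def set_block_encode split_beta)
  moreover have "digraph_iso (mw_states Q s) (mw_edges Q s)
      (mw_states (block_encoded_rules a b f Q) (block_encode a b f s))
      (mw_edges (block_encoded_rules a b f Q) (block_encode a b f s))"
  proof (rule digraph_iso_if_simulation[where S = "{w. set w \<subseteq> A}"])
    have "\<forall>(r, t) \<in> Q. r \<noteq> [] \<and> set r \<subseteq> A" using rules nonempty by auto
    thus "mw_step (block_encoded_rules a b f Q) (block_encode a b f u) v' \<longleftrightarrow>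
        (\<exists>v. mw_step Q u v \<and> v' = block_encode a b f v)" if "u \<in> {w. set w \<subseteq> A}" for u v'
      using mw_step_block_encoded_iff[OF \<open>a \<noteq> b\<close> inj] that by blast
  qed (use \<open>set s \<subseteq> A\<close> mw_step_preserves_alphabet[OF rules] inj_on_block_encode[OF \<open>a \<noteq> b\<close> inj]
        in auto)
  ultimately show ?thesis by blast
qed

theorem lemma4:
  fixes R :: "('a list \<times> 'a list) set" and s :: "'a list" and \<Sigma> :: "'a set"
    and a b :: 'b
  assumes "multiway_system R s \<Sigma>" and "a \<noteq> b"
  shows "\<exists>(R' :: ('b list \<times> 'b list) set) s'. multiway_system R' s' {a, b} \<and>
           digraph_iso (mw_states R s) (mw_edges R s) (mw_states R' s') (mw_edges R' s')"
proof -
  note marked = end_marked_normalization[OF assms(1)]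
  obtain R' :: "('b list \<times> 'b list) set" and s' where "multiway_system R' s' {a, b}"
    and "digraph_iso (mw_states (end_marked_rules R \<Sigma>) (end_marked s))
      (mw_edges (end_marked_rules R \<Sigma>) (end_marked s)) (mw_states R' s') (mw_edges R' s')"
    using binary_normalization[OF marked[THEN conjunct1] marked[THEN conjunct2, THEN conjunct1]
        assms(2)]
    by blast
  with marked show ?thesis by (blast intro: digraph_iso_trans)
qed

end
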